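(* Let $\mathcal{H}$ be a finite-dimensional Hilbert space and let $\Phi:\mathcal{B}(\mathcal{H})\to\mathcal{B}(\mathcal{H})$ be a unital quantum channel (completely positive, trace-preserving, with $\Phi(\mathbb{1})=\mathbb{1}$). Let $\rho_{\text{in}}=\sum_{i=1}^{r}p_i|p_i\rangle\langle p_i|$ be a density matrix on $\mathcal{H}$ of rank $r$, where $\{|p_i\rangle\}_{i=1}^r$ are orthonormal, $0<p_i\leq1$, $\sum_{i=1}^r p_i=1$, and let $\rho_{\text{out}}=\Phi(\rho_{\text{in}})$. Let $\Delta S\equiv S(\rho_{\text{out}})-S(\rho_{\text{in}})$ and $$L_{\text{otm}}\equiv-\ln\Big(\sum_{i=1}^{r}e^{-C(\Phi(|p_i\rangle\langle p_i|),\rho_{\text{out}})}\Big).$$ Then $\Delta S\geq L_{\text{otm}}\geq 0$.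
   Context: $\mathcal{B}(\mathcal{H})$ denotes the set of density matrices on $\mathcal{H}$ and $\mathbb{1}$ the identity on $\mathcal{H}$. $S(\rho)\equiv-\mathrm{Tr}[\rho\ln\rho]$ is the von Neumann entropy. $C(\rho_1,\rho_2)\equiv-\mathrm{Tr}[\rho_1\ln\rho_2]$ is the quantum cross entropy of $\rho_1$ with respect to $\rho_2$; it is finite when $\mathrm{supp}(\rho_1)\subseteq\mathrm{supp}(\rho_2)$ (with $\ln\rho_2$ taken on the support of $\rho_2$) and $+\infty$ otherwise. *)

theory Defs
  imports Complex_Main "HOL-Library.Extended_Real" "Jordan_Normal_Form.Matrix"
begin

text \<open>Operators on the n-dimensional Hilbert space C^n are complex n x n matrices.\<close>

definition mtrace :: "complex mat \<Rightarrow> complex" where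
  "mtrace A = (\<Sum>i<dim_row A. A $$ (i, i))"

definition adj :: "complex mat \<Rightarrow> complex mat" where
  "adj A = mat (dim_col A) (dim_row A) (\<lambda>(i, j). cnj (A $$ (j, i)))"

definition cinner :: "complex vec \<Rightarrow> complex vec \<Rightarrow> complex" where
  "cinner v w = (\<Sum>i<dim_vec v. cnj (v $ i) * w $ i)"

definition hermitian :: "complex mat \<Rightarrow> bool" where
  "hermitian A \<longleftrightarrow> adj A = A"

definition psd :: "nat \<Rightarrow> complex mat \<Rightarrow> bool" where
  "psd n A \<longleftrightarrow> A \<in> carrier_mat n n \<and> hermitian A \<and>
     (\<forall>v \<in> carrier_vec n. 0 \<le> Re (cinner v (A *\<^sub>v v)))"

definition density_matrix :: "nat \<Rightarrow> complex mat \<Rightarrow> bool" where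
  "density_matrix n \<rho> \<longleftrightarrow> psd n \<rho> \<and> mtrace \<rho> = 1"

definition unitary_mat :: "nat \<Rightarrow> complex mat \<Rightarrow> bool" where
  "unitary_mat n U \<longleftrightarrow> U \<in> carrier_mat n n \<and> adj U * U = 1\<^sub>m n"

definition rdiag :: "nat \<Rightarrow> (nat \<Rightarrow> real) \<Rightarrow> complex mat" where
  "rdiag n d = mat n n (\<lambda>(i, j). if i = j then complex_of_real (d i) else 0)"

definition mat_fun :: "nat \<Rightarrow> (real \<Rightarrow> real) \<Rightarrow> complex mat \<Rightarrow> complex mat" where
  "mat_fun n f A =
     (let (U, d) = (SOME (U, d). unitary_mat n U \<and> A = U * rdiag n d * adj U)
      in U * rdiag n (f \<circ> d) * adj U)"

definition ln_supp :: "real \<Rightarrow> real" where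
  "ln_supp x = (if x > 0 then ln x else 0)"

definition supp :: "complex mat \<Rightarrow> complex vec set" where
  "supp A = {A *\<^sub>v v | v. v \<in> carrier_vec (dim_col A)}"

definition vN_entropy :: "nat \<Rightarrow> complex mat \<Rightarrow> real" where
  "vN_entropy n \<rho> = - Re (mtrace (\<rho> * mat_fun n ln_supp \<rho>))"

definition cross_entropy :: "nat \<Rightarrow> complex mat \<Rightarrow> complex mat \<Rightarrow> ereal" where
  "cross_entropy n \<rho>1 \<rho>2 =
     (if supp \<rho>1 \<subseteq> supp \<rho>2 then ereal (- Re (mtrace (\<rho>1 * mat_fun n ln_supp \<rho>2))) else \<infinity>)"

definition exp_neg :: "ereal \<Rightarrow> real" where
  "exp_neg x = (case x of ereal y \<Rightarrow> exp (- y) | PInfty \<Rightarrow> 0 | MInfty \<Rightarrow> 0)"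

definition ketbra :: "complex vec \<Rightarrow> complex mat" where
  "ketbra v = mat (dim_vec v) (dim_vec v) (\<lambda>(i, j). v $ i * cnj (v $ j))"

text \<open>(id_k \<otimes> Phi) applied to a k n x k n matrix viewed as a k x k block matrix of n x n blocks.\<close>
definition ampliate :: "nat \<Rightarrow> nat \<Rightarrow> (complex mat \<Rightarrow> complex mat) \<Rightarrow> complex mat \<Rightarrow> complex mat" where
  "ampliate k n \<Phi> M = mat (k * n) (k * n) (\<lambda>(a, b).
      \<Phi> (mat n n (\<lambda>(i, j). M $$ ((a div n) * n + i, (b div n) * n + j))) $$ (a mod n, b mod n))"

definition linear_map :: "nat \<Rightarrow> (complex mat \<Rightarrow> complex mat) \<Rightarrow> bool" where
  "linear_map n \<Phi> \<longleftrightarrow>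
     (\<forall>A \<in> carrier_mat n n. \<Phi> A \<in> carrier_mat n n) \<and>
     (\<forall>A \<in> carrier_mat n n. \<forall>B \<in> carrier_mat n n. \<Phi> (A + B) = \<Phi> A + \<Phi> B) \<and>
     (\<forall>A \<in> carrier_mat n n. \<forall>c. \<Phi> (c \<cdot>\<^sub>m A) = c \<cdot>\<^sub>m \<Phi> A)"

definition completely_positive :: "nat \<Rightarrow> (complex mat \<Rightarrow> complex mat) \<Rightarrow> bool" where
  "completely_positive n \<Phi> \<longleftrightarrow>
     (\<forall>k. \<forall>M. psd (k * n) M \<longrightarrow> psd (k * n) (ampliate k n \<Phi> M))"

definition trace_preserving :: "nat \<Rightarrow> (complex mat \<Rightarrow> complex mat) \<Rightarrow> bool" where
  "trace_preserving n \<Phi> \<longleftrightarrow> (\<forall>A \<in> carrier_mat n n. mtrace (\<Phi> A) = mtrace A)"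

definition quantum_channel :: "nat \<Rightarrow> (complex mat \<Rightarrow> complex mat) \<Rightarrow> bool" where
  "quantum_channel n \<Phi> \<longleftrightarrow> linear_map n \<Phi> \<and> completely_positive n \<Phi> \<and> trace_preserving n \<Phi>"

definition unital :: "nat \<Rightarrow> (complex mat \<Rightarrow> complex mat) \<Rightarrow> bool" where
  "unital n \<Phi> \<longleftrightarrow> \<Phi> (1\<^sub>m n) = 1\<^sub>m n"

end

theory Submission
  imports Defs "HOL-Analysis.Convex" "Jordan_Normal_Form.Schur_Decomposition" "Jordan_Normal_Form.Spectral_Radius"
begin

(* Write sigma_i = Phi(|p_i><p_i|). By linearity rho_out = sum_i p_i sigma_i, so
   S(rho_out) = sum_i p_i C(sigma_i, rho_out), while S(rho_in) = - sum_i p_i ln p_i because the p_i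
   are orthonormal; Gibbs' variational inequality then gives Delta S >= L_otm.
   For L_otm >= 0, Jensen's inequality in an eigenbasis of rho_out bounds exp(-C(sigma_i, rho_out))
   by Tr(sigma_i rho_out), and unitality gives sum_i sigma_i = Phi(P) <= Phi(1) = 1 for the projection
   P = sum_i |p_i><p_i|, so that sum_i exp(-C(sigma_i, rho_out)) <= Tr rho_out = 1. *)

lemma adj_dims [simp]: "dim_row (adj A) = dim_col A" "dim_col (adj A) = dim_row A"
  unfolding adj_def by simp_all

lemma adj_carrier_mat [simp]: "A \<in> carrier_mat m n \<Longrightarrow> adj A \<in> carrier_mat n m"
  unfolding carrier_mat_def by simp

lemma index_adj [simp]: "i < dim_col A \<Longrightarrow> j < dim_row A \<Longrightarrow> adj A $$ (i, j) = cnj (A $$ (j, i))"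
  unfolding adj_def by simp

lemma adj_adj [simp]: "adj (adj A) = A"
  by (rule eq_matI) auto

lemma adj_mult:
  assumes "A \<in> carrier_mat m k" "B \<in> carrier_mat k n"
  shows "adj (A * B) = adj B * adj A"
  by (rule eq_matI) (use assms in \<open>auto simp: scalar_prod_def mult.commute\<close>)

lemma rdiag_carrier_mat [simp]: "rdiag n d \<in> carrier_mat n n"
  by (simp add: rdiag_def)

lemma rdiag_dims [simp]: "dim_row (rdiag n d) = n" "dim_col (rdiag n d) = n"
  by (simp_all add: rdiag_def)

lemma index_mult_mat_sum:
  assumes "A \<in> carrier_mat m k" "B \<in> carrier_mat k n" "i < m" "j < n"
  shows "(A * B) $$ (i, j) = (\<Sum>l<k. A $$ (i, l) * B $$ (l, j))"
  using assms by (auto simp: scalar_prod_def atLeast0LessThan intro!: sum.cong)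

lemma index_mult_mat_vec_sum:
  assumes "A \<in> carrier_mat n m" "x \<in> carrier_vec m" "i < n"
  shows "(A *\<^sub>v x) $ i = (\<Sum>l<m. A $$ (i, l) * x $ l)"
  using assms by (auto simp: scalar_prod_def atLeast0LessThan)

lemma index_rdiag_conj:
  assumes U: "U \<in> carrier_mat n n" and ab: "a < n" "b < n"
  shows "(U * rdiag n d * adj U) $$ (a, b) = (\<Sum>k<n. U $$ (a, k) * d k * cnj (U $$ (b, k)))"
proof -
  have Ud: "(U * rdiag n d) $$ (a, k) = U $$ (a, k) * d k" if "k < n" for k
    using ab that unfolding index_mult_mat_sum[OF U rdiag_carrier_mat ab(1) that]
    by (simp add: rdiag_def if_distrib cong: if_cong)
  have "(U * rdiag n d * adj U) $$ (a, b) = (\<Sum>k<n. (U * rdiag n d) $$ (a, k) * adj U $$ (k, b))"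
    using U ab by (intro index_mult_mat_sum) auto
  also have "\<dots> = (\<Sum>k<n. U $$ (a, k) * d k * cnj (U $$ (b, k)))"
    using U ab by (intro sum.cong refl) (simp add: Ud del: index_mult_mat(1))
  finally show ?thesis .
qed

lemma mtrace_mult:
  assumes "A \<in> carrier_mat n n" "B \<in> carrier_mat n n"
  shows "mtrace (A * B) = (\<Sum>a<n. \<Sum>b<n. A $$ (a, b) * B $$ (b, a))"
  unfolding mtrace_def using assms
  by (intro sum.cong) (auto simp: index_mult_mat_sum[of _ n n _ n] simp del: index_mult_mat(1))

lemma cinner_self:
  assumes "x \<in> carrier_vec n"
  shows "cinner x x = complex_of_real (\<Sum>a<n. (cmod (x $ a))\<^sup>2)"
  using assms unfolding cinner_def of_real_sum
  by (intro sum.cong) (auto simp: mult.commute complex_norm_square simp del: of_real_power)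

lemma cscalar_prod_self:
  assumes "x \<in> carrier_vec n"
  shows "x \<bullet>c x = complex_of_real (\<Sum>a<n. (cmod (x $ a))\<^sup>2)"
  using assms unfolding of_real_sum
  by (auto simp: scalar_prod_def atLeast0LessThan complex_norm_square simp del: of_real_power
      intro!: sum.cong)

lemma cinner_mat_vec:
  assumes "X \<in> carrier_mat n n" "x \<in> carrier_vec n" "y \<in> carrier_vec n"
  shows "cinner x (X *\<^sub>v y) = (\<Sum>a<n. \<Sum>b<n. cnj (x $ a) * X $$ (a, b) * y $ b)"
  unfolding cinner_def using assms
  by (auto simp: scalar_prod_def atLeast0LessThan sum_distrib_left mult_ac intro!: sum.cong)

lemma cinner_zero_right [simp]: "x \<in> carrier_vec n \<Longrightarrow> cinner x (0\<^sub>v n) = 0"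
  unfolding cinner_def by simp

lemma cinner_cnj:
  assumes "x \<in> carrier_vec n" "y \<in> carrier_vec n"
  shows "cnj (cinner x y) = cinner y x"
  using assms unfolding cinner_def by (simp add: mult.commute)

lemma cinner_smult_right:
  "x \<in> carrier_vec n \<Longrightarrow> y \<in> carrier_vec n \<Longrightarrow> cinner x (c \<cdot>\<^sub>v y) = c * cinner x y"
  unfolding cinner_def by (simp add: sum_distrib_left mult_ac)

lemma sum_cnj_mult_self: "(\<Sum>i\<in>I. cnj (x i) * x i) = complex_of_real (\<Sum>i\<in>I. (cmod (x i))\<^sup>2)"
  unfolding of_real_sum by (simp add: complex_norm_square mult.commute del: of_real_power)

lemma orthonormal_index_sum:
  fixes r :: nat
  assumes "\<forall>i<r. v i \<in> carrier_vec n" "\<forall>i<r. \<forall>j<r. cinner (v i) (v j) = (if i = j then 1 else 0)"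
    "i < r" "j < r"
  shows "(\<Sum>a<n. cnj (v i $ a) * v j $ a) = (if i = j then 1 else 0)"
proof -
  have "dim_vec (v i) = n" using assms by auto
  then show ?thesis using assms(2)[rule_format, OF assms(3,4)] unfolding cinner_def by simp
qed

lemma hermitian_index:
  assumes "hermitian A" "A \<in> carrier_mat n n" "i < n" "j < n"
  shows "A $$ (i, j) = cnj (A $$ (j, i))"
  by (metis assms carrier_matD hermitian_def index_adj)

lemma hermitianI:
  assumes "A \<in> carrier_mat n n" "\<And>i j. i < n \<Longrightarrow> j < n \<Longrightarrow> A $$ (i, j) = cnj (A $$ (j, i))"
  shows "hermitian A"
  unfolding hermitian_def
proof (rule eq_matI)
  fix i j assume "i < dim_row A" "j < dim_col A"
  then show "adj A $$ (i, j) = A $$ (i, j)"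
    using assms(1) assms(2)[of j i] by simp
qed (use assms(1) in auto)

lemma unitary_mat_carrier: "unitary_mat n U \<Longrightarrow> U \<in> carrier_mat n n"
  unfolding unitary_mat_def by simp

lemma unitary_mat_right_inverse:
  assumes "unitary_mat n U" shows "U * adj U = 1\<^sub>m n"
  using mat_mult_left_right_inverse[of "adj U" n U] assms unfolding unitary_mat_def by auto

lemma unitary_cols_orthonormal:
  assumes "unitary_mat n U" "k < n" "l < n"
  shows "(\<Sum>a<n. cnj (U $$ (a, k)) * U $$ (a, l)) = (if k = l then 1 else 0)"
proof -
  have U: "U \<in> carrier_mat n n" using assms(1) by (rule unitary_mat_carrier)
  have "(\<Sum>a<n. cnj (U $$ (a, k)) * U $$ (a, l)) = (adj U * U) $$ (k, l)"
    using U assms by (subst index_mult_mat_sum[of _ n n _ n]) (auto intro!: sum.cong)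
  then show ?thesis
    using assms unfolding unitary_mat_def by simp
qed

lemma unitary_rows_orthonormal:
  assumes "unitary_mat n U" "a < n" "b < n"
  shows "(\<Sum>k<n. U $$ (a, k) * cnj (U $$ (b, k))) = (if a = b then 1 else 0)"
proof -
  have U: "U \<in> carrier_mat n n" using assms(1) by (rule unitary_mat_carrier)
  have "(\<Sum>k<n. U $$ (a, k) * cnj (U $$ (b, k))) = (U * adj U) $$ (a, b)"
    using U assms by (subst index_mult_mat_sum[of _ n n _ n]) (auto intro!: sum.cong)
  then show ?thesis
    using assms unitary_mat_right_inverse[OF assms(1)] by simp
qed

lemma unitary_mult:
  assumes "unitary_mat n U" "unitary_mat n V"
  shows "unitary_mat n (U * V)"
proof -
  have U: "U \<in> carrier_mat n n" and V: "V \<in> carrier_mat n n"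
    using assms by (simp_all add: unitary_mat_carrier)
  have "adj (U * V) * (U * V) = adj V * (adj U * U) * V"
    using U V by (simp add: adj_mult[of _ n n _ n] assoc_mult_mat[of _ n n _ n _ n] mult_carrier_mat[of _ n n _ n])
  then show ?thesis
    using assms U V unfolding unitary_mat_def by simp
qed

lemma hermitian_conj:
  assumes "A \<in> carrier_mat n n" "hermitian A" "W \<in> carrier_mat n n"
  shows "hermitian (adj W * A * W)"
  using assms unfolding hermitian_def
  by (simp add: adj_mult[of _ n n _ n] assoc_mult_mat[of _ n n _ n _ n])

lemma hermitian_rdiag_conj:
  assumes "U \<in> carrier_mat n n"
  shows "hermitian (U * rdiag n d * adj U)"
proof (rule hermitianI)
  show "U * rdiag n d * adj U \<in> carrier_mat n n"
    using assms by (metis adj_carrier_mat mult_carrier_mat rdiag_carrier_mat)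
qed (use assms in \<open>auto simp: index_rdiag_conj mult_ac simp del: index_mult_mat(1)\<close>)

lemma rdiag_conj_mult:
  assumes "W \<in> carrier_mat n n" "V \<in> carrier_mat n n"
  shows "W * (V * rdiag n d * adj V) * adj W = (W * V) * rdiag n d * adj (W * V)"
  using assms by (simp add: adj_mult[of _ n n _ n] assoc_mult_mat[of _ n n _ n _ n] mult_carrier_mat[of _ n n _ n])

section \<open>The spectral theorem for Hermitian matrices\<close>

lemma orthogonal_basis_extending:
  fixes u :: "complex vec"
  assumes u: "u \<in> carrier_vec n" and u0: "u \<noteq> 0\<^sub>v n"
  obtains ws where "set ws \<subseteq> carrier_vec n" "corthogonal ws" "length ws = n" "ws ! 0 = u"
proof -
  interpret cof_vec_space n "TYPE(complex)" .
  define b where "b = basis_completion u"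
  from basis_completion[OF u u0, folded b_def]
  have b: "distinct b" "\<not> lin_dep (set b)" "set b \<subseteq> carrier_vec n" "hd b = u" "length b = n"
    by auto
  have "n > 0" using u u0 by (cases n) auto
  with b obtain vs where bv: "b = u # vs" by (cases b) auto
  define ws where "ws = gram_schmidt n b"
  from gram_schmidt_result[OF b(3,1,2) ws_def]
  have ws: "set ws \<subseteq> carrier_vec n" "corthogonal ws" "length ws = n"
    using b(5) by auto
  have "hd ws = u" unfolding ws_def bv using u by simp
  with ws(3) \<open>n > 0\<close> have "ws ! 0 = u" by (cases ws) auto
  with ws show ?thesis by (rule that)
qed

lemma unitary_normalized_cols:
  assumes ws: "set ws \<subseteq> carrier_vec n" "corthogonal ws" "length ws = n"
  defines "s \<equiv> \<lambda>j. sqrt (\<Sum>a<n. (cmod (ws ! j $ a))\<^sup>2)"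
  shows "unitary_mat n (mat n n (\<lambda>(a, j). ws ! j $ a / complex_of_real (s j)))"
    (is "unitary_mat n ?W")
proof -
  have wsc: "ws ! j \<in> carrier_vec n" if "j < n" for j using ws that by auto
  have self: "ws ! j \<bullet>c ws ! j = complex_of_real ((s j)\<^sup>2)" if "j < n" for j
    unfolding s_def cscalar_prod_self[OF wsc[OF that]] by (simp add: sum_nonneg)
  have nonzero: "s j \<noteq> 0" if "j < n" for j
    using corthogonalD[OF ws(2), of j j] self[OF that] ws(3) that by auto
  have "(adj ?W * ?W) $$ (j, l) = 1\<^sub>m n $$ (j, l)" if j: "j < n" and l: "l < n" for j l
  proof -
    have "(adj ?W * ?W) $$ (j, l) = (ws ! l \<bullet>c ws ! j) / (complex_of_real (s j) * complex_of_real (s l))"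
      using j l wsc[OF j] wsc[OF l]
      by (subst index_mult_mat_sum[of _ n n _ n])
        (auto simp: scalar_prod_def atLeast0LessThan mult.commute sum_divide_distrib intro!: sum.cong)
    also have "\<dots> = 1\<^sub>m n $$ (j, l)"
      using corthogonalD[OF ws(2), of l j] self[OF j] nonzero[OF j] j l ws(3)
      by (cases "j = l") (auto simp: power2_eq_square)
    finally show ?thesis .
  qed
  then show ?thesis
    unfolding unitary_mat_def by auto
qed

lemma unitary_first_col_exists:
  assumes u: "u \<in> carrier_vec n" and u1: "cinner u u = 1"
  obtains W where "unitary_mat n W" "\<And>a. a < n \<Longrightarrow> W $$ (a, 0) = u $ a"
proof -
  have "u \<noteq> 0\<^sub>v n" using u1 unfolding cinner_def by auto
  then obtain ws where ws: "set ws \<subseteq> carrier_vec n" "corthogonal ws" "length ws = n" "ws ! 0 = u"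
    using orthogonal_basis_extending[OF u] by blast
  define s where "s j = sqrt (\<Sum>a<n. (cmod (ws ! j $ a))\<^sup>2)" for j
  have "complex_of_real (\<Sum>a<n. (cmod (ws ! 0 $ a))\<^sup>2) = 1"
    using u1 cinner_self[OF u] ws(4) by simp
  then have "s 0 = 1" unfolding s_def of_real_eq_1_iff by simp
  then show ?thesis
    using unitary_normalized_cols[OF ws(1-3)] ws(4) that[of "mat n n (\<lambda>(a, j). ws ! j $ a / s j)"]
    unfolding s_def by auto
qed

lemma unit_eigenvector_exists:
  assumes A: "A \<in> carrier_mat n n" and n: "n > 0"
  obtains e u where "u \<in> carrier_vec n" "cinner u u = 1" "A *\<^sub>v u = e \<cdot>\<^sub>v u"
proof -
  obtain e where "e \<in> spectrum A" using spectrum_non_empty[OF A n] by auto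
  then obtain v where "eigenvector A v e" unfolding spectrum_def eigenvalue_def by auto
  then have v: "v \<in> carrier_vec n" and v0: "v \<noteq> 0\<^sub>v n" and Av: "A *\<^sub>v v = e \<cdot>\<^sub>v v"
    using A unfolding eigenvector_def by auto
  define N where "N = (\<Sum>a<n. (cmod (v $ a))\<^sup>2)"
  have "v \<bullet>c v \<noteq> 0" using v v0 by simp
  then have "N \<noteq> 0" unfolding N_def cscalar_prod_self[OF v] by (metis of_real_0)
  then have N: "N > 0" unfolding N_def by (simp add: order_le_neq_trans sum_nonneg)
  define u where "u = complex_of_real (1 / sqrt N) \<cdot>\<^sub>v v"
  have u: "u \<in> carrier_vec n" unfolding u_def using v by simp
  have sqrt_N: "complex_of_real (sqrt N) * complex_of_real (sqrt N) = complex_of_real N"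
    using N unfolding of_real_mult[symmetric] by simp
  have "cinner u u = cinner v v / complex_of_real N"
    unfolding cinner_def u_def using v by (simp add: sum_divide_distrib sqrt_N mult_ac)
  then have "cinner u u = 1" using N unfolding cinner_self[OF v, folded N_def] by simp
  moreover have "A *\<^sub>v u = e \<cdot>\<^sub>v u"
    unfolding u_def mult_mat_vec[OF A v] Av smult_smult_assoc by (simp only: mult.commute)
  ultimately show ?thesis using u that by blast
qed

lemma index_adj_mult_mult:
  assumes "W \<in> carrier_mat n n" "A \<in> carrier_mat n n" "i < n" "j < n"
  shows "(adj W * A * W) $$ (i, j) = (\<Sum>a<n. \<Sum>b<n. cnj (W $$ (a, i)) * A $$ (a, b) * W $$ (b, j))"
proof -
  have "(adj W * A * W) $$ (i, j) = (\<Sum>b<n. (adj W * A) $$ (i, b) * W $$ (b, j))"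
    using assms by (intro index_mult_mat_sum[of _ n n]) auto
  also have "\<dots> = (\<Sum>b<n. \<Sum>a<n. cnj (W $$ (a, i)) * A $$ (a, b) * W $$ (b, j))"
    using assms by (intro sum.cong refl, subst index_mult_mat_sum[of _ n n _ n])
      (auto simp: sum_distrib_right intro!: sum.cong)
  also have "\<dots> = (\<Sum>a<n. \<Sum>b<n. cnj (W $$ (a, i)) * A $$ (a, b) * W $$ (b, j))"
    by (rule sum.swap)
  finally show ?thesis .
qed

lemma hermitian_deflation:
  assumes A: "A \<in> carrier_mat n n" "hermitian A" and W: "unitary_mat n W"
    and u: "u \<in> carrier_vec n" "\<And>a. a < n \<Longrightarrow> W $$ (a, 0) = u $ a" and Au: "A *\<^sub>v u = e \<cdot>\<^sub>v u"
    and n: "n > 0"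
  shows "\<And>i. i < n \<Longrightarrow> (adj W * A * W) $$ (i, 0) = (if i = 0 then complex_of_real (Re e) else 0)"
    and "\<And>j. j < n \<Longrightarrow> (adj W * A * W) $$ (0, j) = (if j = 0 then complex_of_real (Re e) else 0)"
proof -
  have Wc: "W \<in> carrier_mat n n" using W by (rule unitary_mat_carrier)
  have hA': "hermitian (adj W * A * W)" using hermitian_conj[OF A Wc] .
  have A'c: "adj W * A * W \<in> carrier_mat n n"
    using A(1) Wc by (meson adj_carrier_mat mult_carrier_mat)
  have Au_entry: "(\<Sum>b<n. A $$ (a, b) * W $$ (b, 0)) = e * W $$ (a, 0)" if "a < n" for a
    using index_mult_mat_vec_sum[OF A(1) u(1) that] Au u that by simp
  have col0: "(adj W * A * W) $$ (i, 0) = (if i = 0 then e else 0)" if "i < n" for i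
  proof -
    have "(adj W * A * W) $$ (i, 0) = (\<Sum>a<n. cnj (W $$ (a, i)) * (\<Sum>b<n. A $$ (a, b) * W $$ (b, 0)))"
      unfolding index_adj_mult_mult[OF Wc A(1) that n] by (simp add: sum_distrib_left mult.assoc)
    also have "\<dots> = (\<Sum>a<n. cnj (W $$ (a, i)) * (e * W $$ (a, 0)))"
      by (intro sum.cong refl) (simp add: Au_entry)
    also have "\<dots> = e * (\<Sum>a<n. cnj (W $$ (a, i)) * W $$ (a, 0))"
      by (simp add: sum_distrib_left mult_ac)
    finally show ?thesis
      using unitary_cols_orthonormal[OF W that n] by simp
  qed
  have "cnj e = e"
    using hermitian_index[OF hA' A'c n n] unfolding col0[OF n] by simp
  then have e: "complex_of_real (Re e) = e" by (simp add: complex_eq_iff)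
  show "(adj W * A * W) $$ (i, 0) = (if i = 0 then complex_of_real (Re e) else 0)" if "i < n" for i
    unfolding e by (rule col0[OF that])
  show "(adj W * A * W) $$ (0, j) = (if j = 0 then complex_of_real (Re e) else 0)" if "j < n" for j
    using hermitian_index[OF hA' A'c n that] unfolding col0[OF that] e by (simp add: \<open>cnj e = e\<close>)
qed

definition one_oplus_mat :: "nat \<Rightarrow> complex mat \<Rightarrow> complex mat" where
  "one_oplus_mat m V = mat (Suc m) (Suc m)
     (\<lambda>(i, j). if i = 0 \<or> j = 0 then (if i = j then 1 else 0) else V $$ (i - 1, j - 1))"

lemma unitary_one_oplus_mat:
  assumes V: "unitary_mat m V"
  shows "unitary_mat (Suc m) (one_oplus_mat m V)"
proof -
  let ?V = "one_oplus_mat m V"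
  have Vc: "?V \<in> carrier_mat (Suc m) (Suc m)" by (simp add: one_oplus_mat_def)
  have "(adj ?V * ?V) $$ (j, l) = 1\<^sub>m (Suc m) $$ (j, l)" if j: "j < Suc m" and l: "l < Suc m" for j l
  proof -
    have "(adj ?V * ?V) $$ (j, l) = (\<Sum>a<Suc m. cnj (?V $$ (a, j)) * ?V $$ (a, l))"
      using Vc j l by (subst index_mult_mat_sum[of _ "Suc m" "Suc m" _ "Suc m"]) (auto intro!: sum.cong)
    also have "\<dots> =
      cnj (?V $$ (0, j)) * ?V $$ (0, l) + (\<Sum>a<m. cnj (?V $$ (Suc a, j)) * ?V $$ (Suc a, l))"
      by (rule sum.lessThan_Suc_shift)
    also have "\<dots> = 1\<^sub>m (Suc m) $$ (j, l)"
    proof (cases "j = 0 \<or> l = 0")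
      case False
      then obtain j' l' where "j = Suc j'" "l = Suc l'" by (meson not0_implies_Suc)
      then show ?thesis
        using j l unitary_cols_orthonormal[OF V, of j' l'] by (simp add: one_oplus_mat_def)
    qed (use j l in \<open>auto simp: one_oplus_mat_def\<close>)
    finally show ?thesis .
  qed
  then show ?thesis
    using Vc unfolding unitary_mat_def by auto
qed

lemma index_one_oplus_rdiag_conj:
  assumes V: "V \<in> carrier_mat m m" and ij: "i < Suc m" "j < Suc m"
  shows "(one_oplus_mat m V * rdiag (Suc m) d * adj (one_oplus_mat m V)) $$ (i, j) =
    (if i = 0 \<or> j = 0 then (if i = j then complex_of_real (d 0) else 0)
     else (V * rdiag m (d \<circ> Suc) * adj V) $$ (i - 1, j - 1))"
proof -
  let ?V = "one_oplus_mat m V"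
  have "(?V * rdiag (Suc m) d * adj ?V) $$ (i, j) = (\<Sum>k<Suc m. ?V $$ (i, k) * d k * cnj (?V $$ (j, k)))"
    using ij by (intro index_rdiag_conj) (auto simp: one_oplus_mat_def)
  also have "\<dots> = ?V $$ (i, 0) * d 0 * cnj (?V $$ (j, 0)) +
      (\<Sum>k<m. ?V $$ (i, Suc k) * d (Suc k) * cnj (?V $$ (j, Suc k)))"
    by (rule sum.lessThan_Suc_shift)
  also have "\<dots> = (if i = 0 \<or> j = 0 then (if i = j then complex_of_real (d 0) else 0)
     else (V * rdiag m (d \<circ> Suc) * adj V) $$ (i - 1, j - 1))"
    using ij V by (auto simp: one_oplus_mat_def index_rdiag_conj simp del: index_mult_mat(1))
  finally show ?thesis .
qed

lemma one_oplus_decomposition: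
  assumes A: "A \<in> carrier_mat (Suc m) (Suc m)"
    and col0: "\<And>i. i < Suc m \<Longrightarrow> A $$ (i, 0) = (if i = 0 then complex_of_real e else 0)"
    and row0: "\<And>j. j < Suc m \<Longrightarrow> A $$ (0, j) = (if j = 0 then complex_of_real e else 0)"
    and V: "V \<in> carrier_mat m m"
    and block: "mat m m (\<lambda>(i, j). A $$ (Suc i, Suc j)) = V * rdiag m d * adj V"
  shows "A = one_oplus_mat m V * rdiag (Suc m) (\<lambda>k. if k = 0 then e else d (k - 1)) * adj (one_oplus_mat m V)"
    (is "A = ?B")
proof (rule eq_matI)
  fix i j assume "i < dim_row ?B" "j < dim_col ?B"
  then have ij: "i < Suc m" "j < Suc m" by (auto simp: one_oplus_mat_def)
  have inner: "A $$ (Suc i', Suc j') = (V * rdiag m d * adj V) $$ (i', j')" if "i' < m" "j' < m" for i' j'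
    using that by (simp add: block[symmetric])
  show "A $$ (i, j) = ?B $$ (i, j)"
    using ij col0 row0 V
    by (cases i; cases j) (auto simp: index_one_oplus_rdiag_conj inner comp_def simp del: index_mult_mat(1))
qed (use A in \<open>auto simp: one_oplus_mat_def\<close>)

theorem hermitian_spectral_decomposition:
  assumes "A \<in> carrier_mat n n" "hermitian A"
  shows "\<exists>U d. unitary_mat n U \<and> A = U * rdiag n d * adj U"
  using assms
proof (induction n arbitrary: A)
  case 0
  have "unitary_mat 0 (1\<^sub>m 0)" "A = 1\<^sub>m 0 * rdiag 0 (\<lambda>_. 0) * adj (1\<^sub>m 0)"
    using 0 unfolding unitary_mat_def by auto
  then show ?case by blast
next
  case (Suc m)
  obtain e u where u: "u \<in> carrier_vec (Suc m)" "cinner u u = 1" and Au: "A *\<^sub>v u = e \<cdot>\<^sub>v u"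
    using unit_eigenvector_exists[OF Suc.prems(1)] by blast
  obtain W where W: "unitary_mat (Suc m) W" and W0: "\<And>a. a < Suc m \<Longrightarrow> W $$ (a, 0) = u $ a"
    using unitary_first_col_exists[OF u] by blast
  have Wc: "W \<in> carrier_mat (Suc m) (Suc m)" using W by (rule unitary_mat_carrier)
  define A' where "A' = adj W * A * W"
  have A'c: "A' \<in> carrier_mat (Suc m) (Suc m)" and hA': "hermitian A'"
    unfolding A'_def using Wc Suc.prems hermitian_conj by auto
  define C where "C = mat m m (\<lambda>(i, j). A' $$ (Suc i, Suc j))"
  have "hermitian C"
    by (rule hermitianI[of _ m]) (auto simp: C_def intro: hermitian_index[OF hA' A'c])
  then obtain V d where V: "unitary_mat m V" and CV: "C = V * rdiag m d * adj V"
    using Suc.IH[of C] by (auto simp: C_def)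
  define d' where "d' k = (if k = 0 then Re e else d (k - 1))" for k
  have "A' = one_oplus_mat m V * rdiag (Suc m) d' * adj (one_oplus_mat m V)"
    unfolding d'_def using hermitian_deflation[OF Suc.prems W u(1) W0 Au, folded A'_def] CV
    by (intro one_oplus_decomposition[OF A'c _ _ unitary_mat_carrier[OF V]]) (auto simp: C_def)
  moreover have "W * A' * adj W = (W * adj W) * A * (W * adj W)"
    using Wc Suc.prems(1) unfolding A'_def
    by (simp add: assoc_mult_mat[of _ "Suc m" "Suc m" _ "Suc m" _ "Suc m"]
        mult_carrier_mat[of _ "Suc m" "Suc m" _ "Suc m"])
  then have "A = W * A' * adj W"
    using Suc.prems(1) unfolding unitary_mat_right_inverse[OF W] by simp
  ultimately have "A = (W * one_oplus_mat m V) * rdiag (Suc m) d' * adj (W * one_oplus_mat m V)"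
    using rdiag_conj_mult[OF Wc unitary_mat_carrier[OF unitary_one_oplus_mat[OF V]]] by simp
  then show ?case
    using unitary_mult[OF W unitary_one_oplus_mat[OF V]] by blast
qed

lemma mat_fun_spectral:
  assumes "A \<in> carrier_mat n n" "hermitian A"
  obtains U d where "unitary_mat n U" "A = U * rdiag n d * adj U"
    "mat_fun n f A = U * rdiag n (f \<circ> d) * adj U"
proof -
  define P where "P = (\<lambda>(U, d). unitary_mat n U \<and> A = U * rdiag n d * adj U)"
  have ex: "\<exists>x. P x" using hermitian_spectral_decomposition[OF assms] unfolding P_def by auto
  obtain U d where Ud: "(SOME x. P x) = (U, d)" by (cases "SOME x. P x") auto
  have "P (U, d)" using someI_ex[OF ex] Ud by simp
  moreover have "mat_fun n f A = U * rdiag n (f \<circ> d) * adj U"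
    unfolding mat_fun_def P_def[symmetric] Ud by simp
  ultimately show ?thesis using that unfolding P_def by auto
qed

lemma mat_fun_carrier:
  assumes "A \<in> carrier_mat n n" "hermitian A"
  shows "mat_fun n f A \<in> carrier_mat n n"
  using mat_fun_spectral[OF assms, of f] by (metis adj_carrier_mat mult_carrier_mat rdiag_carrier_mat unitary_mat_carrier)

definition sesq_form :: "nat \<Rightarrow> complex mat \<Rightarrow> (nat \<Rightarrow> complex) \<Rightarrow> (nat \<Rightarrow> complex) \<Rightarrow> complex" where
  "sesq_form n X f g = (\<Sum>a<n. \<Sum>b<n. cnj (f a) * X $$ (a, b) * g b)"

text \<open>This is the diagonal entry \<open>(adj U * X * U) $$ (k, k)\<close>.\<close>

definition col_form :: "nat \<Rightarrow> complex mat \<Rightarrow> complex mat \<Rightarrow> nat \<Rightarrow> complex" where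
  "col_form n U X k = sesq_form n X (\<lambda>a. U $$ (a, k)) (\<lambda>a. U $$ (a, k))"

definition mat_lincomb :: "nat \<Rightarrow> nat \<Rightarrow> (nat \<Rightarrow> complex) \<Rightarrow> (nat \<Rightarrow> complex mat) \<Rightarrow> complex mat" where
  "mat_lincomb n r c X = mat n n (\<lambda>(a, b). \<Sum>i<r. c i * X i $$ (a, b))"

lemma mat_lincomb_carrier [simp]: "mat_lincomb n r c X \<in> carrier_mat n n"
  unfolding mat_lincomb_def by simp

lemma mat_lincomb_dims [simp]: "dim_row (mat_lincomb n r c X) = n" "dim_col (mat_lincomb n r c X) = n"
  unfolding mat_lincomb_def by simp_all

lemma index_mat_lincomb [simp]:
  "a < n \<Longrightarrow> b < n \<Longrightarrow> mat_lincomb n r c X $$ (a, b) = (\<Sum>i<r. c i * X i $$ (a, b))"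
  unfolding mat_lincomb_def by simp

lemma cinner_mat_vec_sesq_form:
  assumes "X \<in> carrier_mat n n" "x \<in> carrier_vec n" "y \<in> carrier_vec n"
  shows "cinner x (X *\<^sub>v y) = sesq_form n X (\<lambda>a. x $ a) (\<lambda>b. y $ b)"
  unfolding sesq_form_def by (rule cinner_mat_vec[OF assms])

lemma sesq_form_hermitian:
  assumes "X \<in> carrier_mat n n" "hermitian X"
  shows "sesq_form n X f g = cnj (sesq_form n X g f)"
proof -
  have "cnj (sesq_form n X g f) = (\<Sum>a<n. \<Sum>b<n. g a * cnj (X $$ (a, b)) * cnj (f b))"
    unfolding sesq_form_def by simp
  also have "\<dots> = (\<Sum>a<n. \<Sum>b<n. g a * X $$ (b, a) * cnj (f b))"
    by (intro sum.cong refl) (subst hermitian_index[OF assms(2,1)], auto)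
  also have "\<dots> = sesq_form n X f g"
    unfolding sesq_form_def by (subst sum.swap) (simp add: mult_ac)
  finally show ?thesis by simp
qed

lemma sesq_form_lincomb:
  "sesq_form n (mat_lincomb n r c X) f g = (\<Sum>i<r. c i * sesq_form n (X i) f g)"
proof -
  have "sesq_form n (mat_lincomb n r c X) f g =
      (\<Sum>a<n. \<Sum>b<n. \<Sum>i<r. c i * (cnj (f a) * X i $$ (a, b) * g b))"
    unfolding sesq_form_def
    by (intro sum.cong refl) (simp add: sum_distrib_left sum_distrib_right mult_ac)
  also have "\<dots> = (\<Sum>i<r. c i * sesq_form n (X i) f g)"
    unfolding sesq_form_def sum_distrib_left by (subst sum.swap, subst (2) sum.swap) simp
  finally show ?thesis .
qed

lemma sesq_form_one: "sesq_form n (1\<^sub>m n) f g = (\<Sum>a<n. cnj (f a) * g a)"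
proof -
  have "(\<Sum>b<n. cnj (f a) * 1\<^sub>m n $$ (a, b) * g b) = cnj (f a) * g a" if "a < n" for a
  proof -
    have "(\<Sum>b<n. cnj (f a) * 1\<^sub>m n $$ (a, b) * g b) = (\<Sum>b<n. if a = b then cnj (f a) * g b else 0)"
      using that by (intro sum.cong refl) auto
    then show ?thesis using that by simp
  qed
  then show ?thesis unfolding sesq_form_def by (intro sum.cong) auto
qed

lemma sesq_form_minus:
  "A \<in> carrier_mat n n \<Longrightarrow> B \<in> carrier_mat n n \<Longrightarrow>
    sesq_form n (A - B) f g = sesq_form n A f g - sesq_form n B f g"
  unfolding sesq_form_def by (simp add: algebra_simps sum_subtractf)

lemma col_form_cinner:
  assumes "U \<in> carrier_mat n n" "X \<in> carrier_mat n n" "k < n"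
  shows "col_form n U X k = cinner (col U k) (X *\<^sub>v col U k)"
proof -
  have "col_form n U X k = sesq_form n X (\<lambda>a. col U k $ a) (\<lambda>a. col U k $ a)"
    unfolding col_form_def sesq_form_def using assms by (intro sum.cong refl) auto
  then show ?thesis
    using cinner_mat_vec_sesq_form[OF assms(2)] assms by simp
qed

lemma col_form_lincomb: "col_form n U (mat_lincomb n r c X) k = (\<Sum>i<r. c i * col_form n U (X i) k)"
  unfolding col_form_def by (rule sesq_form_lincomb)

lemma col_form_rdiag_conj:
  assumes U: "unitary_mat n U" and k: "k < n"
  shows "col_form n U (U * rdiag n d * adj U) k = d k"
proof -
  have Uc: "U \<in> carrier_mat n n" using U by (rule unitary_mat_carrier)
  have "col_form n U (U * rdiag n d * adj U) k =
      (\<Sum>a<n. \<Sum>b<n. \<Sum>l<n. d l * ((cnj (U $$ (a, k)) * U $$ (a, l)) * (cnj (U $$ (b, l)) * U $$ (b, k))))"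
    unfolding col_form_def sesq_form_def
    by (intro sum.cong refl) (simp add: index_rdiag_conj[OF Uc] sum_distrib_left sum_distrib_right mult_ac)
  also have "\<dots> = (\<Sum>l<n. d l *
      ((\<Sum>a<n. cnj (U $$ (a, k)) * U $$ (a, l)) * (\<Sum>b<n. cnj (U $$ (b, l)) * U $$ (b, k))))"
    by (subst sum.swap, subst (2) sum.swap)
      (intro sum.cong refl, subst sum_product, simp add: sum_distrib_left)
  also have "\<dots> = d k"
    using k by (simp add: unitary_cols_orthonormal[OF U] if_distrib cong: if_cong)
  finally show ?thesis .
qed

lemma sum_col_form:
  assumes U: "unitary_mat n U" and X: "X \<in> carrier_mat n n"
  shows "(\<Sum>k<n. col_form n U X k) = mtrace X"
proof -
  have "(\<Sum>k<n. col_form n U X k) = (\<Sum>a<n. \<Sum>b<n. X $$ (a, b) * (\<Sum>k<n. U $$ (b, k) * cnj (U $$ (a, k))))"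
    unfolding col_form_def sesq_form_def sum_distrib_left
    by (subst sum.swap, subst (2) sum.swap) (simp add: mult_ac)
  also have "\<dots> = mtrace X"
    unfolding mtrace_def using X by (simp add: unitary_rows_orthonormal[OF U] if_distrib cong: if_cong)
  finally show ?thesis .
qed

lemma mtrace_mult_rdiag_conj:
  assumes U: "U \<in> carrier_mat n n" and X: "X \<in> carrier_mat n n"
  shows "mtrace (X * (U * rdiag n d * adj U)) = (\<Sum>k<n. d k * col_form n U X k)"
proof -
  have "mtrace (X * (U * rdiag n d * adj U)) =
      (\<Sum>a<n. \<Sum>b<n. X $$ (a, b) * (\<Sum>k<n. U $$ (b, k) * d k * cnj (U $$ (a, k))))"
    using U X by (subst mtrace_mult[OF X])
      (auto simp: index_rdiag_conj simp del: index_mult_mat(1) intro!: sum.cong)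
  also have "\<dots> = (\<Sum>k<n. d k * col_form n U X k)"
    unfolding col_form_def sesq_form_def sum_distrib_left
    by (subst sum.swap, subst (2) sum.swap) (simp add: mult_ac)
  finally show ?thesis .
qed

lemma mtrace_lincomb_mult:
  assumes L: "L \<in> carrier_mat n n" and X: "\<And>i. i < r \<Longrightarrow> X i \<in> carrier_mat n n"
  shows "mtrace (mat_lincomb n r c X * L) = (\<Sum>i<r. c i * mtrace (X i * L))"
proof -
  have "mtrace (mat_lincomb n r c X * L) = (\<Sum>a<n. \<Sum>b<n. \<Sum>i<r. c i * (X i $$ (a, b) * L $$ (b, a)))"
    using L by (simp add: mtrace_mult[of _ n] sum_distrib_left sum_distrib_right mult_ac)
  also have "\<dots> = (\<Sum>i<r. c i * mtrace (X i * L))"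
    using X L by (subst sum.swap, subst (2) sum.swap) (simp add: mtrace_mult[of _ n] sum_distrib_left)
  finally show ?thesis .
qed

lemma mtrace_add:
  assumes "A \<in> carrier_mat n n" "B \<in> carrier_mat n n"
  shows "mtrace (A + B) = mtrace A + mtrace B"
  using assms unfolding mtrace_def by (simp add: sum.distrib)

lemma mtrace_mat_lincomb:
  assumes "\<And>i. i < r \<Longrightarrow> X i \<in> carrier_mat n n"
  shows "mtrace (mat_lincomb n r c X) = (\<Sum>i<r. c i * mtrace (X i))"
proof -
  have "mtrace (mat_lincomb n r c X) = mtrace (mat_lincomb n r c X * 1\<^sub>m n)" by simp
  also have "\<dots> = (\<Sum>i<r. c i * mtrace (X i * 1\<^sub>m n))"
    by (rule mtrace_lincomb_mult[OF one_carrier_mat assms])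
  also have "\<dots> = (\<Sum>i<r. c i * mtrace (X i))"
    using assms by (intro sum.cong refl) (metis lessThan_iff right_mult_one_mat)
  finally show ?thesis .
qed

lemma mtrace_state_mixture:
  fixes r :: nat
  assumes "\<And>i. i < r \<Longrightarrow> X i \<in> carrier_mat n n" "\<And>i. i < r \<Longrightarrow> mtrace (X i) = 1"
    and "(\<Sum>i<r. p i) = 1"
  shows "mtrace (mat_lincomb n r (\<lambda>i. complex_of_real (p i)) X) = 1"
  using assms by (simp add: mtrace_mat_lincomb flip: of_real_sum)

lemma psd_sesq_form_nonneg:
  assumes "psd n X"
  shows "0 \<le> Re (sesq_form n X f f)"
proof -
  have X: "X \<in> carrier_mat n n" using assms unfolding psd_def by simp
  have "0 \<le> Re (cinner (vec n f) (X *\<^sub>v vec n f))"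
    using assms unfolding psd_def by auto
  also have "cinner (vec n f) (X *\<^sub>v vec n f) = sesq_form n X f f"
    unfolding cinner_mat_vec_sesq_form[OF X vec_carrier vec_carrier] sesq_form_def by simp
  finally show ?thesis .
qed

lemma psd_col_form_nonneg: "psd n X \<Longrightarrow> 0 \<le> Re (col_form n U X k)"
  unfolding col_form_def by (rule psd_sesq_form_nonneg)

lemma sesq_form_shift:
  "sesq_form n X (\<lambda>a. f a + complex_of_real t * g a) (\<lambda>a. f a + complex_of_real t * g a) =
   sesq_form n X f f + complex_of_real t * (sesq_form n X f g + sesq_form n X g f)
   + complex_of_real (t * t) * sesq_form n X g g"
  unfolding sesq_form_def by (simp add: algebra_simps sum.distrib sum_distrib_left)

text \<open>A vanishing quadratic form forces \<open>X u = 0\<close>: otherwise moving from \<open>u\<close> slightly in the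
  direction \<open>- X u\<close> would make the form negative.\<close>

lemma psd_kernel:
  assumes P: "psd n X" and u: "u \<in> carrier_vec n" and z: "Re (cinner u (X *\<^sub>v u)) = 0"
  shows "X *\<^sub>v u = 0\<^sub>v n"
proof -
  have X: "X \<in> carrier_mat n n" and hX: "hermitian X" using P unfolding psd_def by auto
  define w where "w = X *\<^sub>v u"
  have w: "w \<in> carrier_vec n" unfolding w_def using X u by simp
  define N where "N = (\<Sum>a<n. (cmod (w $ a))\<^sup>2)"
  have wu: "sesq_form n X (($) w) (($) u) = complex_of_real N"
    unfolding N_def cinner_self[OF w, symmetric]
    using cinner_mat_vec_sesq_form[OF X w u] by (simp add: w_def)
  have uw: "sesq_form n X (($) u) (($) w) = complex_of_real N"
    using sesq_form_hermitian[OF X hX, of "($) u" "($) w"] wu by simp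
  define \<beta> where "\<beta> = Re (sesq_form n X (($) w) (($) w))"
  have \<beta>: "\<beta> \<ge> 0" unfolding \<beta>_def by (rule psd_sesq_form_nonneg[OF P])
  have quad: "0 \<le> 2 * t * N + t * t * \<beta>" for t
    using psd_sesq_form_nonneg[OF P, of "\<lambda>a. u $ a + complex_of_real t * w $ a"] z
    unfolding sesq_form_shift cinner_mat_vec_sesq_form[OF X u u] \<beta>_def by (simp add: wu uw)
  have "N = 0"
  proof (rule ccontr)
    assume "N \<noteq> 0"
    then have N: "N > 0" unfolding N_def by (simp add: order_le_neq_trans sum_nonneg)
    define t where "t = - N / (\<beta> + 1)"
    have "N * \<beta> / (\<beta> + 1) \<le> N" using N \<beta> by (simp add: field_simps)
    then have "2 * N + t * \<beta> > 0" using N unfolding t_def by (simp add: field_simps)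
    moreover have "t < 0" unfolding t_def using N \<beta> by simp
    ultimately have "t * (2 * N + t * \<beta>) < 0" by (simp add: mult_neg_pos)
    then show False using quad[of t] by (simp add: algebra_simps)
  qed
  then have "\<forall>a<n. w $ a = 0"
    unfolding N_def using sum_nonneg_eq_0_iff[of "{..<n}" "\<lambda>a. (cmod (w $ a))\<^sup>2"] by auto
  then show ?thesis unfolding w_def[symmetric] using w by (intro eq_vecI) auto
qed

lemma ketbra_carrier_mat [simp]: "v \<in> carrier_vec n \<Longrightarrow> ketbra v \<in> carrier_mat n n"
  unfolding ketbra_def by auto

lemma ketbra_dims [simp]: "dim_row (ketbra v) = dim_vec v" "dim_col (ketbra v) = dim_vec v"
  unfolding ketbra_def by simp_all

lemma index_ketbra: "v \<in> carrier_vec n \<Longrightarrow> a < n \<Longrightarrow> b < n \<Longrightarrow> ketbra v $$ (a, b) = v $ a * cnj (v $ b)"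
  unfolding ketbra_def by auto

lemma sesq_form_ketbra:
  assumes "v \<in> carrier_vec n"
  shows "sesq_form n (ketbra v) f g = cnj (\<Sum>a<n. cnj (v $ a) * f a) * (\<Sum>b<n. cnj (v $ b) * g b)"
proof -
  have "sesq_form n (ketbra v) f g = (\<Sum>a<n. \<Sum>b<n. (cnj (f a) * v $ a) * (cnj (v $ b) * g b))"
    unfolding sesq_form_def using assms by (intro sum.cong refl) (simp add: index_ketbra mult_ac)
  then show ?thesis by (simp add: sum_product mult_ac) (rule sum.swap)
qed

lemma mtrace_ketbra:
  assumes "v \<in> carrier_vec n"
  shows "mtrace (ketbra v) = cinner v v"
  using assms unfolding mtrace_def cinner_def by (auto simp: index_ketbra mult.commute intro!: sum.cong)

lemma psd_ketbra:
  assumes v: "v \<in> carrier_vec n"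
  shows "psd n (ketbra v)"
  unfolding psd_def
proof (intro conjI ballI)
  show K: "ketbra v \<in> carrier_mat n n" using v by simp
  show "hermitian (ketbra v)"
    by (rule hermitianI[OF K]) (use v in \<open>simp add: index_ketbra\<close>)
  fix w :: "complex vec" assume w: "w \<in> carrier_vec n"
  have "cinner w (ketbra v *\<^sub>v w) = complex_of_real ((cmod (\<Sum>b<n. cnj (v $ b) * w $ b))\<^sup>2)"
    unfolding cinner_mat_vec_sesq_form[OF K w w] sesq_form_ketbra[OF v]
    by (simp add: complex_norm_square mult.commute del: of_real_power)
  then show "0 \<le> Re (cinner w (ketbra v *\<^sub>v w))" by simp
qed

lemma psd_lincomb:
  assumes X: "\<And>i. i < r \<Longrightarrow> psd n (X i)" and q: "\<And>i. i < r \<Longrightarrow> q i \<ge> 0"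
  shows "psd n (mat_lincomb n r (\<lambda>i. complex_of_real (q i)) X)"
  unfolding psd_def
proof (intro conjI ballI)
  let ?L = "mat_lincomb n r (\<lambda>i. complex_of_real (q i)) X"
  show L: "?L \<in> carrier_mat n n" by simp
  show "hermitian ?L"
  proof (rule hermitianI[OF L])
    fix a b assume ab: "a < n" "b < n"
    have "X i $$ (a, b) = cnj (X i $$ (b, a))" if "i < r" for i
      using X[OF that] ab unfolding psd_def by (auto intro: hermitian_index)
    then show "?L $$ (a, b) = cnj (?L $$ (b, a))"
      using ab by (auto intro!: sum.cong)
  qed
  fix w :: "complex vec" assume w: "w \<in> carrier_vec n"
  have "Re (cinner w (?L *\<^sub>v w)) = (\<Sum>i<r. q i * Re (sesq_form n (X i) (($) w) (($) w)))"
    unfolding cinner_mat_vec_sesq_form[OF L w w] sesq_form_lincomb by simp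
  also have "\<dots> \<ge> 0" using X q by (intro sum_nonneg mult_nonneg_nonneg psd_sesq_form_nonneg) auto
  finally show "0 \<le> Re (cinner w (?L *\<^sub>v w))" .
qed

lemma psd_rdiag_conj_nonneg:
  assumes "psd n (U * rdiag n d * adj U)" "unitary_mat n U" "k < n"
  shows "0 \<le> d k"
  using psd_col_form_nonneg[OF assms(1), of U k]
  unfolding col_form_rdiag_conj[OF assms(2,3)] by simp

lemma trace_mult_psd_nonneg:
  assumes A: "psd n A" and B: "psd n B"
  shows "0 \<le> Re (mtrace (A * B))"
proof -
  obtain U d where U: "unitary_mat n U" and BU: "B = U * rdiag n d * adj U"
    using hermitian_spectral_decomposition[of B n] B unfolding psd_def by blast
  have Ac: "A \<in> carrier_mat n n" using A unfolding psd_def by simp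
  have "Re (mtrace (A * B)) = (\<Sum>k<n. d k * Re (col_form n U A k))"
    unfolding BU mtrace_mult_rdiag_conj[OF unitary_mat_carrier[OF U] Ac] by simp
  also have "\<dots> \<ge> 0"
    using A B U BU by (intro sum_nonneg mult_nonneg_nonneg psd_col_form_nonneg psd_rdiag_conj_nonneg) auto
  finally show ?thesis .
qed

text \<open>Bessel's inequality, from \<open>0 \<le> \<parallel>f - g\<parallel>\<^sup>2 = \<parallel>f\<parallel>\<^sup>2 - \<Sum>\<^sub>i \<bar>c\<^sub>i\<bar>\<^sup>2\<close> for the orthogonal projection
  \<open>g = \<Sum>\<^sub>i c\<^sub>i v\<^sub>i\<close>, \<open>c\<^sub>i = \<langle>v\<^sub>i, f\<rangle>\<close>.\<close>

lemma bessel_inequality: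
  fixes r :: nat and f :: "nat \<Rightarrow> complex"
  assumes V: "\<forall>i<r. v i \<in> carrier_vec n"
    and orth: "\<forall>i<r. \<forall>j<r. cinner (v i) (v j) = (if i = j then 1 else 0)"
  shows "(\<Sum>i<r. (cmod (\<Sum>a<n. cnj (v i $ a) * f a))\<^sup>2) \<le> (\<Sum>a<n. (cmod (f a))\<^sup>2)"
proof -
  define c where "c i = (\<Sum>a<n. cnj (v i $ a) * f a)" for i
  define g where "g a = (\<Sum>i<r. c i * v i $ a)" for a
  have g_inner: "(\<Sum>a<n. cnj (g a) * h a) = (\<Sum>i<r. cnj (c i) * (\<Sum>a<n. cnj (v i $ a) * h a))" for h
    unfolding g_def cnj_sum sum_distrib_right sum_distrib_left by (subst sum.swap) (simp add: mult_ac)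
  have coeff: "(\<Sum>a<n. cnj (v i $ a) * g a) = c i" if "i < r" for i
  proof -
    have "(\<Sum>a<n. cnj (v i $ a) * g a) = (\<Sum>j<r. c j * (\<Sum>a<n. cnj (v i $ a) * v j $ a))"
      unfolding g_def sum_distrib_left by (subst sum.swap) (simp add: mult_ac)
    also have "\<dots> = c i"
      using that by (simp add: orthonormal_index_sum[OF V orth] if_distrib cong: if_cong)
    finally show ?thesis .
  qed
  have gf: "(\<Sum>a<n. cnj (g a) * f a) = (\<Sum>i<r. cnj (c i) * c i)"
    unfolding g_inner c_def ..
  have fg: "(\<Sum>a<n. cnj (f a) * g a) = (\<Sum>i<r. cnj (c i) * c i)"
    using arg_cong[OF gf, of cnj] by (simp add: mult.commute)
  have gg: "(\<Sum>a<n. cnj (g a) * g a) = (\<Sum>i<r. cnj (c i) * c i)"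
    unfolding g_inner using coeff by simp
  have "(\<Sum>a<n. cnj (f a - g a) * (f a - g a)) = (\<Sum>a<n. cnj (f a) * f a) - (\<Sum>i<r. cnj (c i) * c i)"
    using fg gf gg by (simp add: algebra_simps sum_subtractf sum.distrib)
  then have "(\<Sum>a<n. (cmod (f a - g a))\<^sup>2) = (\<Sum>a<n. (cmod (f a))\<^sup>2) - (\<Sum>i<r. (cmod (c i))\<^sup>2)"
    unfolding sum_cnj_mult_self of_real_diff[symmetric] of_real_eq_iff .
  moreover have "(\<Sum>a<n. (cmod (f a - g a))\<^sup>2) \<ge> 0" by (intro sum_nonneg) auto
  ultimately show ?thesis unfolding c_def by simp
qed

lemma psd_one_minus_sum_ketbra:
  fixes r :: nat
  assumes V: "\<forall>i<r. v i \<in> carrier_vec n"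
    and orth: "\<forall>i<r. \<forall>j<r. cinner (v i) (v j) = (if i = j then 1 else 0)"
  shows "psd n (1\<^sub>m n - mat_lincomb n r (\<lambda>_. 1) (\<lambda>i. ketbra (v i)))"
  unfolding psd_def
proof (intro conjI ballI)
  let ?P = "mat_lincomb n r (\<lambda>_. 1) (\<lambda>i. ketbra (v i))"
  show IP: "1\<^sub>m n - ?P \<in> carrier_mat n n" by (simp add: minus_carrier_mat)
  show "hermitian (1\<^sub>m n - ?P)"
    by (rule hermitianI[OF IP]) (use V in \<open>auto simp: index_ketbra mult.commute intro!: sum.cong\<close>)
  fix w :: "complex vec" assume w: "w \<in> carrier_vec n"
  have "cinner w ((1\<^sub>m n - ?P) *\<^sub>v w) = sesq_form n (1\<^sub>m n) (($) w) (($) w) - sesq_form n ?P (($) w) (($) w)"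
    unfolding cinner_mat_vec_sesq_form[OF IP w w] by (rule sesq_form_minus) auto
  also have "\<dots> = (\<Sum>a<n. cnj (w $ a) * w $ a) -
      (\<Sum>i<r. cnj (\<Sum>a<n. cnj (v i $ a) * w $ a) * (\<Sum>a<n. cnj (v i $ a) * w $ a))"
    unfolding sesq_form_one sesq_form_lincomb using V by (simp add: sesq_form_ketbra)
  finally show "0 \<le> Re (cinner w ((1\<^sub>m n - ?P) *\<^sub>v w))"
    using bessel_inequality[OF V orth, of "($) w"] unfolding sum_cnj_mult_self by simp
qed

lemma linear_map_zero:
  assumes "Defs.linear_map n \<Phi>"
  shows "\<Phi> (0\<^sub>m n n) = 0\<^sub>m n n"
proof -
  have "\<Phi> (0 \<cdot>\<^sub>m 0\<^sub>m n n) = 0 \<cdot>\<^sub>m \<Phi> (0\<^sub>m n n)" and c: "\<Phi> (0\<^sub>m n n) \<in> carrier_mat n n"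
    using assms zero_carrier_mat unfolding Defs.linear_map_def by blast+
  moreover have "0 \<cdot>\<^sub>m (0\<^sub>m n n :: complex mat) = 0\<^sub>m n n" "0 \<cdot>\<^sub>m \<Phi> (0\<^sub>m n n) = 0\<^sub>m n n"
    using c by auto
  ultimately show ?thesis by simp
qed

lemma linear_map_lincomb:
  assumes lin: "Defs.linear_map n \<Phi>" and X: "\<And>i. i < r \<Longrightarrow> X i \<in> carrier_mat n n"
  shows "\<Phi> (mat_lincomb n r c X) = mat_lincomb n r c (\<lambda>i. \<Phi> (X i))"
  using X
proof (induction r)
  case 0
  have "mat_lincomb n 0 c Y = 0\<^sub>m n n" for Y by (auto simp: mat_lincomb_def)
  then show ?case using linear_map_zero[OF lin] by simp
next
  case (Suc r)
  have split: "mat_lincomb n (Suc r) c Y = mat_lincomb n r c Y + c r \<cdot>\<^sub>m Y r"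
    if "Y r \<in> carrier_mat n n" for Y
    using that by (auto simp: mat_lincomb_def)
  have Xr: "X r \<in> carrier_mat n n" "\<Phi> (X r) \<in> carrier_mat n n"
    using Suc.prems lin unfolding Defs.linear_map_def by auto
  have "\<Phi> (mat_lincomb n (Suc r) c X) = \<Phi> (mat_lincomb n r c X) + c r \<cdot>\<^sub>m \<Phi> (X r)"
    using lin Xr unfolding split[of X, OF Xr(1)] Defs.linear_map_def by simp
  then show ?case
    using Suc split[of "\<lambda>i. \<Phi> (X i)", OF Xr(2)] by simp
qed

lemma channel_psd:
  assumes ch: "quantum_channel n \<Phi>" and X: "psd n X"
  shows "psd n (\<Phi> X)"
proof -
  have Xc: "X \<in> carrier_mat n n" using X unfolding psd_def by simp
  have "\<Phi> X \<in> carrier_mat n n"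
    using ch Xc unfolding quantum_channel_def Defs.linear_map_def by simp
  moreover have "mat n n (\<lambda>(i, j). X $$ (i, j)) = X"
    using Xc by auto
  ultimately have "ampliate 1 n \<Phi> X = \<Phi> X"
    by (auto simp: ampliate_def)
  moreover have "psd (1 * n) X \<longrightarrow> psd (1 * n) (ampliate 1 n \<Phi> X)"
    using ch unfolding quantum_channel_def completely_positive_def by blast
  ultimately show ?thesis using X by simp
qed

lemma channel_pure_state:
  assumes "quantum_channel n \<Phi>" "v \<in> carrier_vec n" "cinner v v = 1"
  shows "psd n (\<Phi> (ketbra v))" "mtrace (\<Phi> (ketbra v)) = 1"
  using assms channel_psd[OF assms(1) psd_ketbra[OF assms(2)]] mtrace_ketbra[OF assms(2)]
  unfolding quantum_channel_def trace_preserving_def by auto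

text \<open>Unitality enters here: \<open>\<Phi>(\<one>) = \<one>\<close> and \<open>\<Phi>(\<one> - P) \<ge> 0\<close> for the projection
  \<open>P = \<Sum>\<^sub>i |v\<^sub>i\<rangle>\<langle>v\<^sub>i|\<close> give \<open>\<Sum>\<^sub>i \<Phi>(|v\<^sub>i\<rangle>\<langle>v\<^sub>i|) \<le> \<one>\<close>.\<close>

lemma sum_trace_channel_ketbra_le:
  fixes r :: nat
  assumes ch: "quantum_channel n \<Phi>" and unit: "unital n \<Phi>"
    and V: "\<forall>i<r. v i \<in> carrier_vec n"
    and orth: "\<forall>i<r. \<forall>j<r. cinner (v i) (v j) = (if i = j then 1 else 0)"
    and \<rho>: "psd n \<rho>"
  shows "(\<Sum>i<r. Re (mtrace (\<Phi> (ketbra (v i)) * \<rho>))) \<le> Re (mtrace \<rho>)"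
proof -
  have lin: "Defs.linear_map n \<Phi>" using ch unfolding quantum_channel_def by simp
  have \<rho>c: "\<rho> \<in> carrier_mat n n" using \<rho> unfolding psd_def by simp
  define P where "P = mat_lincomb n r (\<lambda>_. 1) (\<lambda>i. ketbra (v i))"
  have Pc: "P \<in> carrier_mat n n" unfolding P_def by simp
  have Q: "psd n (\<Phi> (1\<^sub>m n - P))"
    unfolding P_def by (rule channel_psd[OF ch psd_one_minus_sum_ketbra[OF V orth]])
  have Qc: "\<Phi> (1\<^sub>m n - P) \<in> carrier_mat n n" using Q unfolding psd_def by simp
  have PhiP: "\<Phi> P = mat_lincomb n r (\<lambda>_. 1) (\<lambda>i. \<Phi> (ketbra (v i)))"
    unfolding P_def using V by (intro linear_map_lincomb[OF lin]) auto
  have PhiPc: "\<Phi> P \<in> carrier_mat n n" unfolding PhiP by simp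
  have "1\<^sub>m n = \<Phi> (1\<^sub>m n)" using unit unfolding unital_def by simp
  also have "\<dots> = \<Phi> ((1\<^sub>m n - P) + P)" using Pc by (intro arg_cong[where f = \<Phi>] eq_matI) auto
  also have "\<dots> = \<Phi> (1\<^sub>m n - P) + \<Phi> P"
    using lin Pc unfolding Defs.linear_map_def by (simp add: minus_carrier_mat)
  finally have "\<rho> = \<Phi> (1\<^sub>m n - P) * \<rho> + \<Phi> P * \<rho>"
    using \<rho>c by (metis add_mult_distrib_mat[OF Qc PhiPc \<rho>c] left_mult_one_mat)
  then have "mtrace \<rho> = mtrace (\<Phi> (1\<^sub>m n - P) * \<rho>) + mtrace (\<Phi> P * \<rho>)"
    using Qc PhiPc \<rho>c by (metis mtrace_add mult_carrier_mat)
  also have "mtrace (\<Phi> P * \<rho>) = (\<Sum>i<r. mtrace (\<Phi> (ketbra (v i)) * \<rho>))"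
    unfolding PhiP using lin V \<rho>c unfolding Defs.linear_map_def by (subst mtrace_lincomb_mult) auto
  finally show ?thesis
    using trace_mult_psd_nonneg[OF Q \<rho>] by simp
qed

section \<open>Supports and the cross-entropy bound\<close>

lemma rdiag_conj_mult_col:
  assumes U: "unitary_mat n U" and k: "k < n"
  shows "(U * rdiag n d * adj U) *\<^sub>v col U k = complex_of_real (d k) \<cdot>\<^sub>v col U k"
proof (rule eq_vecI)
  have Uc: "U \<in> carrier_mat n n" using U by (rule unitary_mat_carrier)
  fix a assume "a < dim_vec (complex_of_real (d k) \<cdot>\<^sub>v col U k)"
  then have a: "a < n" using Uc by simp
  have "((U * rdiag n d * adj U) *\<^sub>v col U k) $ a =
      (\<Sum>b<n. (\<Sum>l<n. U $$ (a, l) * d l * cnj (U $$ (b, l))) * U $$ (b, k))"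
    using Uc a k by (subst index_mult_mat_vec_sum[of _ n n])
      (auto simp: index_rdiag_conj simp del: index_mult_mat(1) intro!: sum.cong)
  also have "\<dots> = (\<Sum>l<n. U $$ (a, l) * d l * (\<Sum>b<n. cnj (U $$ (b, l)) * U $$ (b, k)))"
    unfolding sum_distrib_left sum_distrib_right by (subst sum.swap) (simp add: mult_ac)
  also have "\<dots> = d k * U $$ (a, k)"
    using k by (simp add: unitary_cols_orthonormal[OF U] if_distrib cong: if_cong)
  finally show "((U * rdiag n d * adj U) *\<^sub>v col U k) $ a = (complex_of_real (d k) \<cdot>\<^sub>v col U k) $ a"
    using Uc a k by simp
qed (use assms in \<open>simp add: unitary_mat_carrier\<close>)

lemma mixture_kernel:
  fixes r :: nat
  assumes \<sigma>: "\<And>i. i < r \<Longrightarrow> psd n (\<sigma> i)" and p: "\<And>i. i < r \<Longrightarrow> p i > 0"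
    and u: "u \<in> carrier_vec n"
    and ker: "mat_lincomb n r (\<lambda>i. complex_of_real (p i)) \<sigma> *\<^sub>v u = 0\<^sub>v n" and i: "i < r"
  shows "\<sigma> i *\<^sub>v u = 0\<^sub>v n"
proof -
  let ?q = "\<lambda>j. p j * Re (sesq_form n (\<sigma> j) (($) u) (($) u))"
  have q: "?q j \<ge> 0" if "j < r" for j
    using p[OF that] psd_sesq_form_nonneg[OF \<sigma>[OF that]] by simp
  have "0 = Re (cinner u (mat_lincomb n r (\<lambda>i. complex_of_real (p i)) \<sigma> *\<^sub>v u))"
    unfolding ker using u by simp
  also have "\<dots> = (\<Sum>j<r. ?q j)"
    unfolding cinner_mat_vec_sesq_form[OF mat_lincomb_carrier u u] sesq_form_lincomb by simp
  finally have "?q i = 0"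
    using sum_nonneg_eq_0_iff[of "{..<r}" ?q] q i by auto
  then have "Re (cinner u (\<sigma> i *\<^sub>v u)) = 0"
    using p[OF i] \<sigma>[OF i] cinner_mat_vec_sesq_form[OF _ u u] unfolding psd_def by simp
  then show ?thesis by (rule psd_kernel[OF \<sigma>[OF i] u])
qed

lemma cinner_hermitian_swap:
  assumes "X \<in> carrier_mat n n" "hermitian X" "x \<in> carrier_vec n" "y \<in> carrier_vec n"
  shows "cinner x (X *\<^sub>v y) = cnj (cinner y (X *\<^sub>v x))"
  unfolding cinner_mat_vec_sesq_form[OF assms(1,3,4)] cinner_mat_vec_sesq_form[OF assms(1,4,3)]
  by (rule sesq_form_hermitian[OF assms(1,2)])

lemma index_rdiag_mult_vec:
  assumes "h \<in> carrier_vec n" "l < n"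
  shows "(rdiag n d *\<^sub>v h) $ l = d l * h $ l"
proof -
  have "(rdiag n d *\<^sub>v h) $ l = (\<Sum>j<n. (if l = j then complex_of_real (d j) else 0) * h $ j)"
    using assms by (subst index_mult_mat_vec_sum[of _ n n]) (auto simp: rdiag_def intro!: sum.cong)
  also have "\<dots> = (\<Sum>j<n. if l = j then d j * h $ j else 0)"
    by (intro sum.cong) auto
  finally show ?thesis using assms by simp
qed

lemma rdiag_conj_mult_unitary:
  assumes U: "unitary_mat n U"
  shows "(U * rdiag n d * adj U) * U = U * rdiag n d"
proof -
  have Uc: "U \<in> carrier_mat n n" using U by (rule unitary_mat_carrier)
  have "(U * rdiag n d * adj U) * U = U * rdiag n d * (adj U * U)"
    using Uc by (simp add: assoc_mult_mat[of _ n n _ n _ n] mult_carrier_mat[of _ n n _ n])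
  then show ?thesis
    using U Uc unfolding unitary_mat_def by simp
qed

text \<open>Expand the vector in the eigenbasis and divide its coefficients by \<open>d\<close>.\<close>

lemma supp_rdiag_conjI:
  assumes U: "unitary_mat n U" and x: "x \<in> carrier_vec n"
    and orth: "\<And>l. l < n \<Longrightarrow> d l = 0 \<Longrightarrow> cinner (col U l) x = 0"
  shows "x \<in> supp (U * rdiag n d * adj U)"
proof -
  have Uc: "U \<in> carrier_mat n n" using U by (rule unitary_mat_carrier)
  define g where "g = adj U *\<^sub>v x"
  have g: "g \<in> carrier_vec n" unfolding g_def using Uc x by (metis adj_carrier_mat mult_mat_vec_carrier)
  have g0: "g $ l = 0" if "l < n" "d l = 0" for l
    using orth[OF that] Uc x that unfolding g_def cinner_def
    by (auto simp: scalar_prod_def atLeast0LessThan)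
  define h where "h = vec n (\<lambda>l. g $ l / d l)"
  have h: "h \<in> carrier_vec n" unfolding h_def by simp
  have Dh: "rdiag n d *\<^sub>v h = g"
    using g g0 h by (intro eq_vecI) (auto simp: index_rdiag_mult_vec h_def simp del: index_mult_mat_vec)
  have \<rho>c: "U * rdiag n d * adj U \<in> carrier_mat n n"
    using Uc by (metis adj_carrier_mat mult_carrier_mat rdiag_carrier_mat)
  have "(U * rdiag n d * adj U) *\<^sub>v (U *\<^sub>v h) = (U * rdiag n d) *\<^sub>v h"
    using assoc_mult_mat_vec[OF \<rho>c Uc h] unfolding rdiag_conj_mult_unitary[OF U] by simp
  also have "\<dots> = U *\<^sub>v g"
    using assoc_mult_mat_vec[OF Uc rdiag_carrier_mat[of n d] h] unfolding Dh .
  also have "\<dots> = (U * adj U) *\<^sub>v x"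
    unfolding g_def using assoc_mult_mat_vec[OF Uc adj_carrier_mat[OF Uc] x] by simp
  also have "\<dots> = x"
    unfolding unitary_mat_right_inverse[OF U] using x by simp
  finally show ?thesis
    unfolding supp_def using Uc h \<rho>c by auto
qed

lemma supp_subset_if_kernel_subset:
  assumes U: "unitary_mat n U" and \<rho>: "\<rho> = U * rdiag n d * adj U"
    and \<sigma>: "\<sigma> \<in> carrier_mat n n" "hermitian \<sigma>"
    and ker: "\<And>k. k < n \<Longrightarrow> d k = 0 \<Longrightarrow> \<sigma> *\<^sub>v col U k = 0\<^sub>v n"
  shows "supp \<sigma> \<subseteq> supp \<rho>"
proof
  have Uc: "U \<in> carrier_mat n n" using U by (rule unitary_mat_carrier)
  fix x assume "x \<in> supp \<sigma>"
  then obtain y where x: "x = \<sigma> *\<^sub>v y" and y: "y \<in> carrier_vec n"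
    unfolding supp_def using \<sigma> by auto
  have "cinner (col U l) x = 0" if l: "l < n" and "d l = 0" for l
    unfolding x using cinner_hermitian_swap[OF \<sigma> col_carrier_vec[OF l Uc] y] ker[OF that] y by simp
  then show "x \<in> supp \<rho>"
    unfolding \<rho> using x y \<sigma> by (intro supp_rdiag_conjI[OF U]) auto
qed

lemma exp_weighted_ln_le:
  fixes w x :: "'a \<Rightarrow> real"
  assumes S: "finite S" and w: "sum w S = 1" "\<And>i. i \<in> S \<Longrightarrow> 0 \<le> w i"
    and x: "\<And>i. i \<in> S \<Longrightarrow> 0 < x i"
  shows "exp (\<Sum>i\<in>S. w i * ln (x i)) \<le> (\<Sum>i\<in>S. w i * x i)"
proof -
  obtain j where j: "j \<in> S" "w j \<noteq> 0" using w(1) by (metis sum.neutral zero_neq_one)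
  then have "0 < w j * x j" using w(2)[OF j(1)] x[OF j(1)] by (simp add: order_le_neq_trans)
  then have pos: "0 < (\<Sum>i\<in>S. w i * x i)"
    using S j w(2) x by (intro sum_pos2[where i = j]) (auto intro!: mult_nonneg_nonneg simp: less_imp_le)
  have "(\<Sum>i\<in>S. w i * ln (x i)) \<le> ln (\<Sum>i\<in>S. w i * x i)"
    using concave_on_sum[OF S _ ln_concave w, of x] j x by auto
  then show ?thesis
    using pos by (metis exp_le_cancel_iff exp_ln)
qed

text \<open>The weights are \<open>w\<^sub>k = \<langle>u\<^sub>k, \<sigma> u\<^sub>k\<rangle>\<close> for the eigenvectors \<open>u\<^sub>k\<close> of \<open>\<rho>\<close>; the kernel
  condition makes them vanish where \<open>ln\<close> is cut off, and Jensen's inequality for \<open>ln\<close> does the rest.\<close>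

lemma exp_trace_mult_ln_le:
  assumes U: "unitary_mat n U" and \<rho>: "\<rho> = U * rdiag n d * adj U" and d: "\<And>k. k < n \<Longrightarrow> 0 \<le> d k"
    and \<sigma>: "psd n \<sigma>" "mtrace \<sigma> = 1"
    and ker: "\<And>k. k < n \<Longrightarrow> d k = 0 \<Longrightarrow> \<sigma> *\<^sub>v col U k = 0\<^sub>v n"
  shows "exp (Re (mtrace (\<sigma> * (U * rdiag n (ln_supp \<circ> d) * adj U)))) \<le> Re (mtrace (\<sigma> * \<rho>))"
proof -
  have Uc: "U \<in> carrier_mat n n" using U by (rule unitary_mat_carrier)
  have \<sigma>c: "\<sigma> \<in> carrier_mat n n" using \<sigma> unfolding psd_def by simp
  define w where "w k = Re (col_form n U \<sigma> k)" for k
  define K where "K = {k \<in> {..<n}. d k \<noteq> 0}"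
  have K: "K \<subseteq> {..<n}" "finite K" unfolding K_def by auto
  have off_K: "\<forall>k \<in> {..<n} - K. w k = 0"
    using ker Uc \<sigma>c unfolding K_def w_def by (auto simp: col_form_cinner)
  have "sum w {..<n} = 1"
    unfolding w_def using sum_col_form[OF U \<sigma>c] \<sigma>(2) by (simp flip: Re_sum)
  then have w_K: "sum w K = 1"
    using sum.mono_neutral_left[OF _ K(1) off_K] by simp
  have trace: "Re (mtrace (\<sigma> * (U * rdiag n f * adj U))) = (\<Sum>k\<in>K. w k * f k)" for f
  proof -
    have "Re (mtrace (\<sigma> * (U * rdiag n f * adj U))) = (\<Sum>k<n. w k * f k)"
      unfolding mtrace_mult_rdiag_conj[OF Uc \<sigma>c] w_def by (simp add: mult.commute)
    also have "\<dots> = (\<Sum>k\<in>K. w k * f k)"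
      using sum.mono_neutral_right[OF _ K(1), of "\<lambda>k. w k * f k"] off_K by simp
    finally show ?thesis .
  qed
  have "(\<Sum>k\<in>K. w k * (ln_supp \<circ> d) k) = (\<Sum>k\<in>K. w k * ln (d k))"
    using d unfolding K_def by (intro sum.cong) (auto simp: ln_supp_def less_le)
  moreover have "exp (\<Sum>k\<in>K. w k * ln (d k)) \<le> (\<Sum>k\<in>K. w k * d k)"
    using w_K d by (intro exp_weighted_ln_le K(2))
      (auto simp: K_def w_def psd_col_form_nonneg[OF \<sigma>(1)] order_le_neq_trans)
  ultimately show ?thesis
    unfolding \<rho> trace by simp
qed

lemma mixture_component_cross_entropy:
  fixes r :: nat
  assumes \<sigma>: "\<And>j. j < r \<Longrightarrow> psd n (\<sigma> j)" and p: "\<And>j. j < r \<Longrightarrow> 0 < p j"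
    and \<rho>: "\<rho> = mat_lincomb n r (\<lambda>j. complex_of_real (p j)) \<sigma>"
    and i: "i < r" and tr: "mtrace (\<sigma> i) = 1"
  shows "cross_entropy n (\<sigma> i) \<rho> = ereal (- Re (mtrace (\<sigma> i * mat_fun n ln_supp \<rho>)))"
    and "exp_neg (cross_entropy n (\<sigma> i) \<rho>) \<le> Re (mtrace (\<sigma> i * \<rho>))"
proof -
  have \<rho>_psd: "psd n \<rho>" unfolding \<rho> using \<sigma> p by (intro psd_lincomb) (auto simp: less_imp_le)
  then obtain U d where U: "unitary_mat n U" and \<rho>U: "\<rho> = U * rdiag n d * adj U"
    and ln\<rho>: "mat_fun n ln_supp \<rho> = U * rdiag n (ln_supp \<circ> d) * adj U"
    using mat_fun_spectral[of \<rho> n] unfolding psd_def by blast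
  have Uc: "U \<in> carrier_mat n n" using U by (rule unitary_mat_carrier)
  have ker: "\<sigma> i *\<^sub>v col U k = 0\<^sub>v n" if "k < n" "d k = 0" for k
    using rdiag_conj_mult_col[OF U \<open>k < n\<close>, of d] \<rho>U \<rho> that Uc
    by (intro mixture_kernel[OF \<sigma> p _ _ i]) auto
  have "supp (\<sigma> i) \<subseteq> supp \<rho>"
    using \<sigma>[OF i] ker unfolding psd_def by (intro supp_subset_if_kernel_subset[OF U \<rho>U]) auto
  then show ce: "cross_entropy n (\<sigma> i) \<rho> = ereal (- Re (mtrace (\<sigma> i * mat_fun n ln_supp \<rho>)))"
    unfolding cross_entropy_def by simp
  show "exp_neg (cross_entropy n (\<sigma> i) \<rho>) \<le> Re (mtrace (\<sigma> i * \<rho>))"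
    unfolding ce exp_neg_def ln\<rho> using \<rho>_psd
    by (simp, intro exp_trace_mult_ln_le[OF U \<rho>U _ \<sigma>[OF i] tr ker])
      (auto intro: psd_rdiag_conj_nonneg[OF _ U] simp: \<rho>U)
qed

section \<open>Entropy of an orthogonal mixture\<close>

lemma col_form_ketbra:
  assumes "U \<in> carrier_mat n n" "v \<in> carrier_vec n" "k < n"
  shows "col_form n U (ketbra v) k = (cmod (cinner (col U k) v))\<^sup>2"
proof -
  have "col_form n U (ketbra v) k = cinner (col U k) v * cnj (cinner (col U k) v)"
    unfolding col_form_def sesq_form_ketbra[OF assms(2)] using assms
    by (simp add: cinner_def mult.commute)
  then show ?thesis by (simp only: complex_norm_square)
qed

lemma parseval_unitary:
  assumes U: "unitary_mat n U" and x: "x \<in> carrier_vec n"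
  shows "(\<Sum>k<n. (cmod (cinner (col U k) x))\<^sup>2) = Re (cinner x x)"
proof -
  have "complex_of_real (\<Sum>k<n. (cmod (cinner (col U k) x))\<^sup>2) = (\<Sum>k<n. col_form n U (ketbra x) k)"
    unfolding of_real_sum using col_form_ketbra[OF unitary_mat_carrier[OF U] x] by simp
  also have "\<dots> = cinner x x"
    using sum_col_form[OF U] mtrace_ketbra[OF x] x by simp
  finally show ?thesis by (metis Re_complex_of_real)
qed

context
  fixes n r :: nat and v :: "nat \<Rightarrow> complex vec" and p d :: "nat \<Rightarrow> real" and U :: "complex mat"
  assumes V: "\<forall>i<r. v i \<in> carrier_vec n"
    and orth: "\<forall>i<r. \<forall>j<r. cinner (v i) (v j) = (if i = j then 1 else 0)"
    and U: "unitary_mat n U"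
    and \<rho>: "mat_lincomb n r (\<lambda>i. complex_of_real (p i)) (\<lambda>i. ketbra (v i)) = U * rdiag n d * adj U"
begin

lemma orthogonal_mixture_eigenvalue:
  assumes i: "i < r" and k: "k < n"
  shows "d k * cinner (col U k) (v i) = p i * cinner (col U k) (v i)"
proof -
  have Uc: "U \<in> carrier_mat n n" using U by (rule unitary_mat_carrier)
  let ?\<rho> = "mat_lincomb n r (\<lambda>i. complex_of_real (p i)) (\<lambda>i. ketbra (v i))"
  have u: "col U k \<in> carrier_vec n" using Uc k by simp
  have vi: "v i \<in> carrier_vec n" using V i by simp
  have herm: "hermitian ?\<rho>" unfolding \<rho> by (rule hermitian_rdiag_conj[OF Uc])
  have "cinner (col U k) (?\<rho> *\<^sub>v v i) = (\<Sum>j<r. p j * (cinner (col U k) (v j) * cinner (v j) (v i)))"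
    unfolding cinner_mat_vec_sesq_form[OF mat_lincomb_carrier u vi] sesq_form_lincomb
    using V u vi Uc by (intro sum.cong refl) (auto simp: sesq_form_ketbra cinner_def mult.commute)
  also have "\<dots> = (\<Sum>j<r. if j = i then p i * cinner (col U k) (v i) else 0)"
    using i orth by (intro sum.cong refl) auto
  also have "\<dots> = p i * cinner (col U k) (v i)"
    using i by simp
  finally have "cinner (col U k) (?\<rho> *\<^sub>v v i) = p i * cinner (col U k) (v i)" .
  moreover have "cinner (col U k) (?\<rho> *\<^sub>v v i) = d k * cinner (col U k) (v i)"
    using cinner_hermitian_swap[OF mat_lincomb_carrier herm u vi] rdiag_conj_mult_col[OF U k, of d]
    unfolding \<rho> using u vi by (simp add: cinner_smult_right cinner_cnj[OF vi u])
  ultimately show ?thesis by simp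
qed

text \<open>Writing \<open>c\<^sub>i\<^sub>k = \<langle>u\<^sub>k, v\<^sub>i\<rangle>\<close> for the eigenvectors \<open>u\<^sub>k\<close>: \<open>d\<^sub>k = \<Sum>\<^sub>i p\<^sub>i \<bar>c\<^sub>i\<^sub>k\<bar>\<^sup>2\<close>,
  \<open>d\<^sub>k = p\<^sub>i\<close> whenever \<open>c\<^sub>i\<^sub>k \<noteq> 0\<close>, and \<open>\<Sum>\<^sub>k \<bar>c\<^sub>i\<^sub>k\<bar>\<^sup>2 = 1\<close>.\<close>

lemma orthogonal_mixture_spectral_sum:
  "(\<Sum>k<n. d k * f (d k)) = (\<Sum>i<r. p i * f (p i))"
proof -
  have Uc: "U \<in> carrier_mat n n" using U by (rule unitary_mat_carrier)
  define c where "c i k = (cmod (cinner (col U k) (v i)))\<^sup>2" for i k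
  have d: "d k = (\<Sum>i<r. p i * c i k)" if k: "k < n" for k
  proof -
    have "complex_of_real (d k) = col_form n U (U * rdiag n d * adj U) k"
      using col_form_rdiag_conj[OF U k] by simp
    also have "\<dots> = complex_of_real (\<Sum>i<r. p i * c i k)"
      unfolding \<rho>[symmetric] col_form_lincomb of_real_sum c_def
      using col_form_ketbra[OF Uc _ k] V by simp
    finally show ?thesis by (simp only: of_real_eq_iff)
  qed
  have c_sum: "(\<Sum>k<n. c i k) = 1" if "i < r" for i
    using parseval_unitary[OF U, of "v i"] V orth that unfolding c_def by simp
  have "(\<Sum>k<n. d k * f (d k)) = (\<Sum>i<r. \<Sum>k<n. p i * c i k * f (d k))"
    using d by (subst sum.swap) (simp add: sum_distrib_right)
  also have "\<dots> = (\<Sum>i<r. \<Sum>k<n. p i * c i k * f (p i))"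
    using orthogonal_mixture_eigenvalue by (intro sum.cong refl) (force simp: c_def)
  also have "\<dots> = (\<Sum>i<r. p i * f (p i))"
    using c_sum by (simp add: sum_distrib_left[symmetric] sum_distrib_right[symmetric] mult_ac)
  finally show ?thesis .
qed

end

lemma vN_entropy_orthogonal_mixture:
  fixes r :: nat
  assumes V: "\<forall>i<r. v i \<in> carrier_vec n"
    and orth: "\<forall>i<r. \<forall>j<r. cinner (v i) (v j) = (if i = j then 1 else 0)"
    and p: "\<And>i. i < r \<Longrightarrow> 0 < p i"
  shows "vN_entropy n (mat_lincomb n r (\<lambda>i. complex_of_real (p i)) (\<lambda>i. ketbra (v i))) =
    - (\<Sum>i<r. p i * ln (p i))"
proof -
  let ?\<rho> = "mat_lincomb n r (\<lambda>i. complex_of_real (p i)) (\<lambda>i. ketbra (v i))"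
  have "psd n ?\<rho>" using V p by (intro psd_lincomb psd_ketbra) (auto simp: less_imp_le)
  then obtain U d where U: "unitary_mat n U" and \<rho>: "?\<rho> = U * rdiag n d * adj U"
    and ln\<rho>: "mat_fun n ln_supp ?\<rho> = U * rdiag n (ln_supp \<circ> d) * adj U"
    using mat_fun_spectral[of ?\<rho> n] unfolding psd_def by blast
  have Uc: "U \<in> carrier_mat n n" using U by (rule unitary_mat_carrier)
  have "mtrace (?\<rho> * mat_fun n ln_supp ?\<rho>) = (\<Sum>k<n. ln_supp (d k) * col_form n U ?\<rho> k)"
    unfolding ln\<rho> by (simp add: mtrace_mult_rdiag_conj[OF Uc mat_lincomb_carrier])
  then have "Re (mtrace (?\<rho> * mat_fun n ln_supp ?\<rho>)) = (\<Sum>k<n. d k * ln_supp (d k))"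
    unfolding \<rho> by (simp add: col_form_rdiag_conj[OF U] mult.commute)
  also have "\<dots> = (\<Sum>i<r. p i * ln_supp (p i))"
    by (rule orthogonal_mixture_spectral_sum[OF V orth U \<rho>])
  also have "\<dots> = (\<Sum>i<r. p i * ln (p i))"
    using p by (simp add: ln_supp_def)
  finally show ?thesis unfolding vN_entropy_def by simp
qed

lemma vN_entropy_mixture:
  fixes r :: nat
  assumes \<sigma>: "\<And>i. i < r \<Longrightarrow> psd n (\<sigma> i)" and p: "\<And>i. i < r \<Longrightarrow> 0 \<le> p i"
    and \<rho>: "\<rho> = mat_lincomb n r (\<lambda>i. complex_of_real (p i)) \<sigma>"
  shows "vN_entropy n \<rho> = (\<Sum>i<r. p i * - Re (mtrace (\<sigma> i * mat_fun n ln_supp \<rho>)))"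
proof -
  have "psd n \<rho>" unfolding \<rho> using \<sigma> p by (rule psd_lincomb)
  then have "mat_fun n ln_supp \<rho> \<in> carrier_mat n n"
    unfolding psd_def by (intro mat_fun_carrier) auto
  then show ?thesis
    using \<sigma> unfolding vN_entropy_def psd_def
    by (subst (1) \<rho>, subst mtrace_lincomb_mult) (auto simp: sum_negf)
qed

text \<open>Gibbs' variational inequality: Jensen's inequality for \<open>ln\<close> with weights \<open>p i\<close> at the
  points \<open>exp (- C i) / p i\<close>.\<close>

lemma gibbs_inequality:
  fixes p C :: "nat \<Rightarrow> real"
  assumes p: "\<And>i. i < r \<Longrightarrow> 0 < p i" and p_sum: "(\<Sum>i<r. p i) = 1"
  shows "- ln (\<Sum>i<r. exp (- C i)) \<le> (\<Sum>i<r. p i * C i) + (\<Sum>i<r. p i * ln (p i))"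
proof -
  have "(\<Sum>i<r. p i * ln (exp (- C i) / p i)) = (\<Sum>i<r. - (p i * C i) - p i * ln (p i))"
    using p by (intro sum.cong) (auto simp: ln_div algebra_simps)
  also have "\<dots> = - (\<Sum>i<r. p i * C i) - (\<Sum>i<r. p i * ln (p i))"
    by (simp add: sum_subtractf sum_negf)
  finally have weighted: "(\<Sum>i<r. p i * ln (exp (- C i) / p i)) = \<dots>" .
  have "exp (\<Sum>i<r. p i * ln (exp (- C i) / p i)) \<le> (\<Sum>i<r. p i * (exp (- C i) / p i))"
    using p p_sum by (intro exp_weighted_ln_le) (auto simp: less_imp_le)
  also have "\<dots> = (\<Sum>i<r. exp (- C i))"
    using p by (intro sum.cong) (auto simp: less_imp_neq[symmetric])
  finally have "(\<Sum>i<r. p i * ln (exp (- C i) / p i)) \<le> ln (\<Sum>i<r. exp (- C i))"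
    by (metis exp_gt_zero exp_le_cancel_iff exp_ln less_le_trans)
  then show ?thesis unfolding weighted by simp
qed

theorem corollary1:
  fixes n r :: nat
    and \<Phi> :: "complex mat \<Rightarrow> complex mat"
    and p :: "nat \<Rightarrow> real"
    and v :: "nat \<Rightarrow> complex vec"
    and \<rho>_in \<rho>_out :: "complex mat"
  assumes channel: "quantum_channel n \<Phi>"
    and unit: "unital n \<Phi>"
    and vecs: "\<forall>i<r. v i \<in> carrier_vec n"
    and orthonormal: "\<forall>i<r. \<forall>j<r. cinner (v i) (v j) = (if i = j then 1 else 0)"
    and p_pos: "\<forall>i<r. 0 < p i \<and> p i \<le> 1"
    and p_sum: "(\<Sum>i<r. p i) = 1"
    and rho_in: "\<rho>_in = mat n n (\<lambda>(a, b). \<Sum>i<r. complex_of_real (p i) * ketbra (v i) $$ (a, b))"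
    and rho_out: "\<rho>_out = \<Phi> \<rho>_in"
  shows "vN_entropy n \<rho>_out - vN_entropy n \<rho>_in
           \<ge> - ln (\<Sum>i<r. exp_neg (cross_entropy n (\<Phi> (ketbra (v i))) \<rho>_out))
       \<and> - ln (\<Sum>i<r. exp_neg (cross_entropy n (\<Phi> (ketbra (v i))) \<rho>_out)) \<ge> 0"
proof -
  have lin: "Defs.linear_map n \<Phi>" using channel unfolding quantum_channel_def by simp
  have p: "\<And>i. i < r \<Longrightarrow> 0 < p i" using p_pos by simp
  define \<sigma> where "\<sigma> i = \<Phi> (ketbra (v i))" for i
  have \<sigma>: "psd n (\<sigma> i)" "mtrace (\<sigma> i) = 1" if "i < r" for i
    unfolding \<sigma>_def using channel_pure_state[OF channel] vecs orthonormal that by auto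
  have in_mix: "\<rho>_in = mat_lincomb n r (\<lambda>i. complex_of_real (p i)) (\<lambda>i. ketbra (v i))"
    unfolding rho_in mat_lincomb_def ..
  have out_mix: "\<rho>_out = mat_lincomb n r (\<lambda>i. complex_of_real (p i)) \<sigma>"
    unfolding rho_out in_mix \<sigma>_def using vecs by (intro linear_map_lincomb[OF lin]) auto
  define C where "C i = - Re (mtrace (\<sigma> i * mat_fun n ln_supp \<rho>_out))" for i
  have cross: "cross_entropy n (\<sigma> i) \<rho>_out = ereal (C i)" "exp (- C i) \<le> Re (mtrace (\<sigma> i * \<rho>_out))"
    if "i < r" for i
    using mixture_component_cross_entropy[of r n \<sigma> p \<rho>_out i] \<sigma> p out_mix that
    unfolding C_def exp_neg_def by auto
  have "vN_entropy n \<rho>_out - vN_entropy n \<rho>_in = (\<Sum>i<r. p i * C i) + (\<Sum>i<r. p i * ln (p i))"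
    using vN_entropy_mixture[OF \<sigma>(1) _ out_mix] vN_entropy_orthogonal_mixture[OF vecs orthonormal p] p
    unfolding in_mix C_def by (simp add: less_imp_le)
  then have "vN_entropy n \<rho>_out - vN_entropy n \<rho>_in \<ge> - ln (\<Sum>i<r. exp (- C i))"
    using gibbs_inequality[OF p p_sum] by simp
  moreover have "(\<Sum>i<r. exp (- C i)) \<le> (\<Sum>i<r. Re (mtrace (\<sigma> i * \<rho>_out)))"
    using cross(2) by (intro sum_mono) simp
  moreover have "psd n \<rho>_out"
    unfolding out_mix using \<sigma> p by (intro psd_lincomb) (auto intro: less_imp_le)
  then have "(\<Sum>i<r. Re (mtrace (\<sigma> i * \<rho>_out))) \<le> Re (mtrace \<rho>_out)"
    unfolding \<sigma>_def by (rule sum_trace_channel_ketbra_le[OF channel unit vecs orthonormal])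
  moreover have "mtrace \<rho>_out = 1"
    unfolding out_mix using \<sigma> p_sum unfolding psd_def by (intro mtrace_state_mixture) auto
  moreover have "0 < (\<Sum>i<r. exp (- C i))"
    using p_sum by (intro sum_pos) auto
  ultimately show ?thesis
    using cross(1) unfolding \<sigma>_def exp_neg_def by simp
qed

end
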